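(* Let $f\in K[X]$ be a regular polynomial with exactly $t+1$ nonzero monomial terms. Then the number of roots of $f$ in $K^\ast=K\setminus\{0\}$ is at most $t(q-1)$, and all roots of $f$ in $K^\ast$ are simple.
   Context: $K$ is a field complete with respect to a non-archimedean discrete valuation $v$, normalized by $v(\pi)=1$ for a uniformizer $\pi$ of the valuation ring $A=\{x\in K: v(x)\geq 0\}$; the residue field $\kappa=A/\pi A$ is finite with $q$ elements and characteristic $p$. For $h=\sum_{i=0}^d c_iX^i\in K[X]$, the Newton polygon of $h$ is the convex hull of the points $(i,v(c_i))$ with $c_i\neq 0$. An edge of a polygon in $\mathbb{R}^2$ is a lower edge if it has an inner normal vector with positive second coordinate. $h$ is regular if for every lower edge $S$ of its Newton polygon, with vertices $(s,v(c_s))$ and $(s',v(c_{s'}))$, $s>s'$: (1) $S$ contains exactly two points of the set $\{(i,v(c_i)) : 0\leq i\leq d,\ c_i\neq 0\}$; (2) $p\nmid (s-s')$. *)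

theory Defs
  imports "HOL-Computational_Algebra.Polynomial" "HOL-Computational_Algebra.Primes"
begin

text \<open>A valuation v : K* -> Z on a field K (the value at 0 is irrelevant and never used).\<close>

definition discrete_valuation :: "('a::field \<Rightarrow> int) \<Rightarrow> bool" where
  "discrete_valuation v \<longleftrightarrow>
     (\<forall>x y. x \<noteq> 0 \<longrightarrow> y \<noteq> 0 \<longrightarrow> v (x * y) = v x + v y) \<and>
     (\<forall>x y. x \<noteq> 0 \<longrightarrow> y \<noteq> 0 \<longrightarrow> x + y \<noteq> 0 \<longrightarrow> min (v x) (v y) \<le> v (x + y)) \<and>
     (\<exists>\<pi>. \<pi> \<noteq> 0 \<and> v \<pi> = 1)"

text \<open>Elements of valuation at least N (together with 0), i.e. the ideal pi^N A.\<close>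
definition vball :: "('a::field \<Rightarrow> int) \<Rightarrow> int \<Rightarrow> 'a set" where
  "vball v N = {x. x = 0 \<or> N \<le> v x}"

definition v_complete :: "('a::field \<Rightarrow> int) \<Rightarrow> bool" where
  "v_complete v \<longleftrightarrow>
     (\<forall>X :: nat \<Rightarrow> 'a.
        (\<forall>N. \<exists>M. \<forall>m\<ge>M. \<forall>n\<ge>M. X m - X n \<in> vball v N) \<longrightarrow>
        (\<exists>L. \<forall>N. \<exists>M. \<forall>n\<ge>M. X n - L \<in> vball v N))"

definition valring :: "('a::field \<Rightarrow> int) \<Rightarrow> 'a set" where
  "valring v = vball v 0"

definition maxideal :: "('a::field \<Rightarrow> int) \<Rightarrow> 'a set" where
  "maxideal v = vball v 1"

definition residue_rel :: "('a::field \<Rightarrow> int) \<Rightarrow> ('a \<times> 'a) set" where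
  "residue_rel v = {(x, y). x \<in> valring v \<and> y \<in> valring v \<and> x - y \<in> maxideal v}"

definition residue_field :: "('a::field \<Rightarrow> int) \<Rightarrow> 'a set set" where
  "residue_field v = valring v // residue_rel v"

definition newton_pts :: "('a::field \<Rightarrow> int) \<Rightarrow> 'a poly \<Rightarrow> (int \<times> int) set" where
  "newton_pts v f = {(int i, v (coeff f i)) | i. coeff f i \<noteq> 0}"

text \<open>c lies on or above the (non-vertical) line through a and b, where fst a < fst b.\<close>
definition on_or_above :: "int \<times> int \<Rightarrow> int \<times> int \<Rightarrow> int \<times> int \<Rightarrow> bool" where
  "on_or_above a b c \<longleftrightarrow> (snd b - snd a) * (fst c - fst a) \<le> (snd c - snd a) * (fst b - fst a)"

definition on_line :: "int \<times> int \<Rightarrow> int \<times> int \<Rightarrow> int \<times> int \<Rightarrow> bool" where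
  "on_line a b c \<longleftrightarrow> (snd b - snd a) * (fst c - fst a) = (snd c - snd a) * (fst b - fst a)"

text \<open>The segment from a to b (fst a < fst b) is a lower edge of the Newton polygon:
  a, b are points of the set, all points lie on or above the line through a and b
  (so the inner normal has positive second coordinate), and a, b are the extreme
  points of the set on that line (so the segment is the full edge).\<close>
definition lower_edge :: "('a::field \<Rightarrow> int) \<Rightarrow> 'a poly \<Rightarrow> int \<times> int \<Rightarrow> int \<times> int \<Rightarrow> bool" where
  "lower_edge v f a b \<longleftrightarrow>
     a \<in> newton_pts v f \<and> b \<in> newton_pts v f \<and> fst a < fst b \<and>
     (\<forall>c\<in>newton_pts v f. on_or_above a b c) \<and>
     (\<forall>c\<in>newton_pts v f. on_line a b c \<longrightarrow> fst a \<le> fst c \<and> fst c \<le> fst b)"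

definition regular :: "('a::field \<Rightarrow> int) \<Rightarrow> nat \<Rightarrow> 'a poly \<Rightarrow> bool" where
  "regular v p f \<longleftrightarrow>
     (\<forall>a b. lower_edge v f a b \<longrightarrow>
        card {c \<in> newton_pts v f. on_line a b c} = 2 \<and>
        \<not> (int p dvd (fst b - fst a)))"

end

theory Submission
  imports Defs
begin

text \<open>Let x be a nonzero root and m = v x. By the ultrametric inequality, the least value of
  v(c_i x^i) = v(c_i) + i m is attained by at least two indices, which then span a lower edge of
  the Newton polygon; by regularity they are exactly two, a < b, with p not dividing b - a. So in
  any sum \<Sum> c_i (i x^i + e_i) with v(e_i) > i m, after subtracting a f(x) = 0 the term
  (b - a) c_b x^b has strictly smaller valuation than all others, and the sum is nonzero. With
  e = 0 this is x f'(x) \<noteq> 0, so roots are simple; with x times the divided difference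
  (f(x') - f(x))/(x' - x) it shows that distinct roots of valuation m are incongruent modulo the
  ideal of valuation m + 1, so there are at most q - 1 of them. Finally, the valuations of the
  roots are negated slopes of lower edges, of which there are at most t.\<close>

section \<open>Discrete valuations\<close>

lemma vball_iff: "x \<in> vball v N \<longleftrightarrow> x = 0 \<or> N \<le> v x"
  by (simp add: vball_def)

locale discretely_valued =
  fixes v :: "'a::field \<Rightarrow> int"
  assumes discrete_valuation: "discrete_valuation v"
begin

lemma valuation_mult: "x \<noteq> 0 \<Longrightarrow> y \<noteq> 0 \<Longrightarrow> v (x * y) = v x + v y"
  using discrete_valuation unfolding discrete_valuation_def by blast

lemma valuation_add: "x \<noteq> 0 \<Longrightarrow> y \<noteq> 0 \<Longrightarrow> x + y \<noteq> 0 \<Longrightarrow> min (v x) (v y) \<le> v (x + y)"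
  using discrete_valuation unfolding discrete_valuation_def by blast

lemma valuation_one [simp]: "v 1 = 0"
  using valuation_mult[of 1 1] by simp

lemma valuation_minus [simp]: "v (- x) = v x"
proof (cases "x = 0")
  case False
  have "v (-1) = 0"
    using valuation_mult[of "-1" "-1"] by simp
  with False show ?thesis
    using valuation_mult[of "-1" x] by simp
qed simp

lemma valuation_divide: "x \<noteq> 0 \<Longrightarrow> y \<noteq> 0 \<Longrightarrow> v (x / y) = v x - v y"
  using valuation_mult[of "x / y" y] by simp

lemma valuation_power: "x \<noteq> 0 \<Longrightarrow> v (x ^ k) = int k * v x"
  by (induction k) (auto simp: valuation_mult algebra_simps)

lemma zero_in_vball [simp]: "0 \<in> vball v N"
  by (simp add: vball_iff)

lemma in_vball_valuation: "x \<in> vball v (v x)"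
  by (simp add: vball_iff)

lemma not_in_vball_valuation_plus_1: "x \<noteq> 0 \<Longrightarrow> x \<notin> vball v (v x + 1)"
  by (simp add: vball_iff)

lemma vball_antimono: "x \<in> vball v N \<Longrightarrow> M \<le> N \<Longrightarrow> x \<in> vball v M"
  by (auto simp: vball_iff)

lemma add_in_vball:
  assumes "x \<in> vball v N" "y \<in> vball v N"
  shows "x + y \<in> vball v N"
  using assms valuation_add[of x y]
  by (cases "x = 0 \<or> y = 0 \<or> x + y = 0") (auto simp: vball_iff)

lemma minus_in_vball_iff [simp]: "- x \<in> vball v N \<longleftrightarrow> x \<in> vball v N"
  by (simp add: vball_iff)

lemma diff_in_vball: "x \<in> vball v N \<Longrightarrow> y \<in> vball v N \<Longrightarrow> x - y \<in> vball v N"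
  using add_in_vball[of x N "- y"] by simp

lemma sum_in_vball: "(\<And>i. i \<in> A \<Longrightarrow> g i \<in> vball v N) \<Longrightarrow> sum g A \<in> vball v N"
  by (induction A rule: infinite_finite_induct) (auto intro: add_in_vball)

lemma mult_in_vball: "x \<in> vball v N \<Longrightarrow> y \<in> vball v M \<Longrightarrow> x * y \<in> vball v (N + M)"
  by (cases "x = 0 \<or> y = 0") (auto simp: vball_iff valuation_mult)

lemma power_in_vball: "x \<in> vball v N \<Longrightarrow> x ^ k \<in> vball v (int k * N)"
proof (induction k)
  case (Suc k)
  then show ?case
    using mult_in_vball[OF Suc.prems Suc.IH[OF Suc.prems]] by (simp add: algebra_simps)
qed (simp add: vball_iff)

lemma of_nat_in_vball: "of_nat n \<in> vball v 0"
proof (induction n)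
  case (Suc n)
  then show ?case
    using add_in_vball[of 1 0 "of_nat n"] by (simp add: vball_iff)
qed simp

lemma of_int_in_vball: "of_int n \<in> vball v 0"
  by (cases n) (auto simp del: of_nat_Suc intro: of_nat_in_vball)

lemma add_nonzero_if_valuation_less:
  assumes "z \<noteq> 0" "w \<in> vball v (v z + 1)"
  shows "z + w \<noteq> 0"
proof
  assume "z + w = 0"
  then have "z = - w"
    by (simp add: eq_neg_iff_add_eq_0)
  with assms show False
    using not_in_vball_valuation_plus_1 by auto
qed

lemma of_int_unit_if_not_dvd:
  assumes "prime (p :: nat)" "of_nat p \<in> vball v 1" "\<not> int p dvd n"
  shows "of_int n \<noteq> (0 :: 'a) \<and> v (of_int n) = 0"
proof -
  have "coprime (int p) n"
    using assms(1,3) prime_imp_coprime[of "int p" n] by simp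
  then obtain a b where "a * int p + b * n = 1"
    using bezout_int[of "int p" n] by auto
  then have bezout: "of_int a * of_nat p + of_int b * of_int n = (1 :: 'a)"
    by (metis of_int_1 of_int_add of_int_mult of_int_of_nat_eq)
  have "of_int n \<notin> vball v (1 :: int)"
  proof
    assume "of_int n \<in> vball v (1 :: int)"
    then have "of_int a * of_nat p + of_int b * of_int n \<in> vball v 1"
      using mult_in_vball[OF of_int_in_vball assms(2)] mult_in_vball[OF of_int_in_vball]
      by (intro add_in_vball) auto
    then show False
      by (simp add: bezout vball_iff)
  qed
  then show ?thesis
    using of_int_in_vball[of n] by (auto simp: vball_iff)
qed

end

section \<open>Polynomials and the Newton polygon\<close>

definition coeff_support :: "'a::zero poly \<Rightarrow> nat set" where
  "coeff_support f = {i. coeff f i \<noteq> 0}"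

lemma coeff_support_subset_degree: "coeff_support f \<subseteq> {..degree f}"
  by (auto simp: coeff_support_def le_degree)

lemma finite_coeff_support [simp]: "finite (coeff_support f)"
  using coeff_support_subset_degree finite_subset by blast

lemma coeff_support_empty_iff: "coeff_support f = {} \<longleftrightarrow> f = 0"
  by (auto simp: coeff_support_def poly_eq_iff)

lemma poly_eq_sum_coeff_support:
  "poly f x = (\<Sum>i\<in>coeff_support f. coeff f i * x ^ i)" for x :: "'a::comm_ring_1"
  unfolding poly_altdef
  by (rule sum.mono_neutral_right[OF _ coeff_support_subset_degree]) (auto simp: coeff_support_def)

lemma poly_eq_sum_atMost:
  "degree f \<le> n \<Longrightarrow> poly f x = (\<Sum>i\<le>n. coeff f i * x ^ i)" for x :: "'a::comm_ring_1"
  unfolding poly_altdef by (rule sum.mono_neutral_left) (auto simp: coeff_eq_0)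

lemma poly_pderiv_times_eq_sum:
  fixes x :: "'a::field"
  shows "x * poly (pderiv f) x = (\<Sum>i\<in>coeff_support f. coeff f i * (of_nat i * x ^ i))"
proof -
  define g where "g i = coeff f i * (of_nat i * x ^ i)" for i
  have "degree (pderiv f) \<le> degree f"
    by (rule degree_le) (auto simp: coeff_pderiv coeff_eq_0)
  then have "x * poly (pderiv f) x = (\<Sum>i\<le>degree f. g (Suc i))"
    by (simp add: poly_eq_sum_atMost sum_distrib_left coeff_pderiv g_def algebra_simps)
  also have "\<dots> = (\<Sum>i\<le>Suc (degree f). g i)"
    by (simp only: sum.atMost_Suc_shift) (simp add: g_def)
  also have "\<dots> = (\<Sum>i\<in>coeff_support f. g i)"
    by (rule sum.mono_neutral_right) (auto simp: coeff_support_def g_def le_SucI le_degree)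
  finally show ?thesis
    by (simp add: g_def)
qed

lemma poly_pderiv_eq_0_if_multiple_root:
  assumes "f \<noteq> 0" "2 \<le> order x f"
  shows "poly (pderiv f) x = 0"
proof -
  have "[:-x, 1:] ^ Suc 1 dvd f"
    using assms by (simp only: order_divides) simp
  then obtain g where "f = [:-x, 1:] ^ Suc 1 * g"
    by (elim dvdE)
  then have "pderiv f = [:-x, 1:] ^ Suc 1 * pderiv g + smult 2 (g * [:-x, 1:])"
    using lemma_order_pderiv1[of x 1 g] by simp
  then show ?thesis
    by simp
qed

definition newton_pt :: "('a::field \<Rightarrow> int) \<Rightarrow> 'a poly \<Rightarrow> nat \<Rightarrow> int \<times> int" where
  "newton_pt v f i = (int i, v (coeff f i))"

lemma newton_pts_eq_image: "newton_pts v f = newton_pt v f ` coeff_support f"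
  by (auto simp: newton_pts_def newton_pt_def coeff_support_def)

lemma inj_newton_pt: "inj (newton_pt v f)"
  by (auto simp: inj_def newton_pt_def)

definition term_val :: "('a::field \<Rightarrow> int) \<Rightarrow> 'a poly \<Rightarrow> int \<Rightarrow> nat \<Rightarrow> int" where
  "term_val v f m i = v (coeff f i) + int i * m"

definition min_term_val :: "('a::field \<Rightarrow> int) \<Rightarrow> 'a poly \<Rightarrow> int \<Rightarrow> int" where
  "min_term_val v f m = Min (term_val v f m ` coeff_support f)"

text \<open>The indices of the terms c_i x^i of least valuation when v x = m; these are the abscissae
  of the Newton points on the supporting line of slope -m.\<close>
definition dominant_indices :: "('a::field \<Rightarrow> int) \<Rightarrow> 'a poly \<Rightarrow> int \<Rightarrow> nat set" where
  "dominant_indices v f m = {i \<in> coeff_support f. term_val v f m i = min_term_val v f m}"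

text \<open>The negated slopes of the lower edges of the Newton polygon.\<close>
definition edge_valuations :: "('a::field \<Rightarrow> int) \<Rightarrow> 'a poly \<Rightarrow> int set" where
  "edge_valuations v f =
     {m. \<exists>i\<in>dominant_indices v f m. \<exists>j\<in>dominant_indices v f m. i < j}"

lemma min_term_val_le: "i \<in> coeff_support f \<Longrightarrow> min_term_val v f m \<le> term_val v f m i"
  unfolding min_term_val_def by (rule Min_le) auto

lemma dominant_indices_subset: "dominant_indices v f m \<subseteq> coeff_support f"
  by (auto simp: dominant_indices_def)

lemma finite_dominant_indices [simp]: "finite (dominant_indices v f m)"
  by (rule finite_subset[OF dominant_indices_subset]) simp

lemma dominant_indices_nonempty:
  assumes "f \<noteq> 0"
  shows "dominant_indices v f m \<noteq> {}"
proof -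
  have "min_term_val v f m \<in> term_val v f m ` coeff_support f"
    unfolding min_term_val_def using assms by (intro Min_in) (auto simp: coeff_support_empty_iff)
  then show ?thesis
    by (auto simp: dominant_indices_def)
qed

lemma dominant_indices_antimono:
  assumes "i \<in> dominant_indices v f m" "j \<in> dominant_indices v f m'" "m < m'"
  shows "j \<le> i"
proof -
  have "term_val v f m i \<le> term_val v f m j" "term_val v f m' j \<le> term_val v f m' i"
    using assms min_term_val_le[of i f v m'] min_term_val_le[of j f v m]
    by (auto simp: dominant_indices_def)
  then have "(int j - int i) * (m' - m) \<le> 0"
    by (simp add: term_val_def algebra_simps)
  with \<open>m < m'\<close> have "int j - int i \<le> 0"
    by (simp add: mult_le_0_iff)
  then show ?thesis
    by simp
qed

lemma edge_valuation_endpoints: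
  assumes "m \<in> edge_valuations v f"
  shows "Min (dominant_indices v f m) \<in> dominant_indices v f m"
    and "Max (dominant_indices v f m) \<in> dominant_indices v f m"
    and "Min (dominant_indices v f m) < Max (dominant_indices v f m)"
proof -
  obtain i j where ij: "i \<in> dominant_indices v f m" "j \<in> dominant_indices v f m" "i < j"
    using assms by (auto simp: edge_valuations_def)
  then have "dominant_indices v f m \<noteq> {}"
    by blast
  then show "Min (dominant_indices v f m) \<in> dominant_indices v f m"
    and "Max (dominant_indices v f m) \<in> dominant_indices v f m"
    by (simp_all add: Min_in Max_in)
  have "Min (dominant_indices v f m) \<le> i" "j \<le> Max (dominant_indices v f m)"
    using ij by simp_all
  with \<open>i < j\<close> show "Min (dominant_indices v f m) < Max (dominant_indices v f m)"
    by linarith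
qed

text \<open>Distinct edge valuations have distinct left endpoints, none of them the last point of the
  support.\<close>
lemma
  shows finite_edge_valuations: "finite (edge_valuations v f)"
    and card_edge_valuations_le: "card (edge_valuations v f) \<le> card (coeff_support f) - 1"
proof -
  let ?left = "\<lambda>m. Min (dominant_indices v f m)" and ?right = "\<lambda>m. Max (dominant_indices v f m)"
  note endpoints = edge_valuation_endpoints[of _ v f]
  have inj: "inj_on ?left (edge_valuations v f)"
  proof (rule linorder_inj_onI')
    fix m m' assume m: "m \<in> edge_valuations v f" and m': "m' \<in> edge_valuations v f" and "m < m'"
    have "?right m' \<le> ?left m"
      using endpoints(1)[OF m] endpoints(2)[OF m'] \<open>m < m'\<close> by (rule dominant_indices_antimono)
    with endpoints(3)[OF m'] show "?left m \<noteq> ?left m'"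
      by linarith
  qed
  have image: "?left ` edge_valuations v f \<subseteq> coeff_support f - {Max (coeff_support f)}"
  proof
    fix l assume "l \<in> ?left ` edge_valuations v f"
    then obtain m where m: "m \<in> edge_valuations v f" and l: "l = ?left m"
      by blast
    have left: "?left m \<in> coeff_support f" and right: "?right m \<in> coeff_support f"
      using endpoints(1,2)[OF m] dominant_indices_subset by blast+
    have "?left m < Max (coeff_support f)"
      using endpoints(3)[OF m] Max_ge[OF finite_coeff_support right] by linarith
    with left show "l \<in> coeff_support f - {Max (coeff_support f)}"
      by (simp add: l)
  qed
  show "finite (edge_valuations v f)"
    using inj image by (rule inj_on_finite) simp
  have "card (edge_valuations v f) \<le> card (coeff_support f - {Max (coeff_support f)})"
    using inj image by (rule card_inj_on_le) simp
  also have "\<dots> \<le> card (coeff_support f) - 1"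
    by (cases "coeff_support f = {}") (simp_all add: card_Diff_singleton)
  finally show "card (edge_valuations v f) \<le> card (coeff_support f) - 1" .
qed

lemma newton_line_position:
  assumes "term_val v f m a = term_val v f m b" "a < b"
  shows "on_or_above (newton_pt v f a) (newton_pt v f b) (newton_pt v f i)
           \<longleftrightarrow> term_val v f m a \<le> term_val v f m i"
    and "on_line (newton_pt v f a) (newton_pt v f b) (newton_pt v f i)
           \<longleftrightarrow> term_val v f m i = term_val v f m a"
proof -
  have vb: "v (coeff f b) = v (coeff f a) + (int a - int b) * m"
    using assms(1) by (simp add: term_val_def algebra_simps)
  have "(v (coeff f b) - v (coeff f a)) * (int i - int a)
      = (v (coeff f i) - v (coeff f a)) * (int b - int a)
        - (int b - int a) * (term_val v f m i - term_val v f m a)"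
    unfolding vb term_val_def by (simp add: algebra_simps)
  with \<open>a < b\<close> show "on_or_above (newton_pt v f a) (newton_pt v f b) (newton_pt v f i)
           \<longleftrightarrow> term_val v f m a \<le> term_val v f m i"
    and "on_line (newton_pt v f a) (newton_pt v f b) (newton_pt v f i)
           \<longleftrightarrow> term_val v f m i = term_val v f m a"
    by (simp_all add: on_or_above_def on_line_def newton_pt_def zero_le_mult_iff)
qed

lemma lower_edge_dominant_indices:
  assumes "m \<in> edge_valuations v f"
  defines "D \<equiv> dominant_indices v f m"
  shows "lower_edge v f (newton_pt v f (Min D)) (newton_pt v f (Max D))"
    and "{c \<in> newton_pts v f. on_line (newton_pt v f (Min D)) (newton_pt v f (Max D)) c}
           = newton_pt v f ` D"
proof -
  let ?a = "Min D" and ?b = "Max D"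
  have "?a \<in> D" "?b \<in> D" "?a < ?b"
    unfolding D_def using edge_valuation_endpoints[OF assms(1)] .
  then have ab: "?a \<in> coeff_support f" "?b \<in> coeff_support f"
    "term_val v f m ?a = min_term_val v f m" "term_val v f m ?b = min_term_val v f m"
    by (auto simp: D_def dominant_indices_def)
  have position:
      "on_or_above (newton_pt v f ?a) (newton_pt v f ?b) (newton_pt v f i)
         \<longleftrightarrow> min_term_val v f m \<le> term_val v f m i"
      "on_line (newton_pt v f ?a) (newton_pt v f ?b) (newton_pt v f i) \<longleftrightarrow> i \<in> D"
    if "i \<in> coeff_support f" for i
    using newton_line_position[of v f m ?a ?b i] ab \<open>?a < ?b\<close> that
    by (auto simp: D_def dominant_indices_def)
  show "{c \<in> newton_pts v f. on_line (newton_pt v f ?a) (newton_pt v f ?b) c} = newton_pt v f ` D"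
    using position(2) dominant_indices_subset[of v f m] unfolding newton_pts_eq_image D_def
    by blast
  show "lower_edge v f (newton_pt v f ?a) (newton_pt v f ?b)"
    unfolding lower_edge_def
  proof (intro conjI ballI impI)
    show "newton_pt v f ?a \<in> newton_pts v f" "newton_pt v f ?b \<in> newton_pts v f"
      using ab unfolding newton_pts_eq_image by blast+
    show "fst (newton_pt v f ?a) < fst (newton_pt v f ?b)"
      using \<open>?a < ?b\<close> by (simp add: newton_pt_def)
    fix c assume "c \<in> newton_pts v f"
    then obtain i where i: "i \<in> coeff_support f" and c: "c = newton_pt v f i"
      unfolding newton_pts_eq_image by blast
    show "on_or_above (newton_pt v f ?a) (newton_pt v f ?b) c"
      unfolding c position(1)[OF i] using i by (rule min_term_val_le)
    assume "on_line (newton_pt v f ?a) (newton_pt v f ?b) c"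
    then have "i \<in> D"
      unfolding c position(2)[OF i] .
    then show "fst (newton_pt v f ?a) \<le> fst c" "fst c \<le> fst (newton_pt v f ?b)"
      unfolding c newton_pt_def D_def by simp_all
  qed
qed

lemma regular_dominant_indices:
  assumes "regular v p f" "m \<in> edge_valuations v f"
  obtains a b where "dominant_indices v f m = {a, b}" "a < b" "\<not> int p dvd (int b - int a)"
proof -
  let ?D = "dominant_indices v f m"
  let ?a = "newton_pt v f (Min ?D)" and ?b = "newton_pt v f (Max ?D)"
  have "card {c \<in> newton_pts v f. on_line ?a ?b c} = 2 \<and> \<not> int p dvd (fst ?b - fst ?a)"
    using assms(1) lower_edge_dominant_indices(1)[OF assms(2)] unfolding regular_def by blast
  then have "card (newton_pt v f ` ?D) = 2" "\<not> int p dvd (int (Max ?D) - int (Min ?D))"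
    unfolding lower_edge_dominant_indices(2)[OF assms(2)] by (simp_all add: newton_pt_def)
  then have "card ?D = 2"
    by (simp add: card_image inj_on_subset[OF inj_newton_pt])
  then obtain a b where "?D = {a, b}" "a < b"
    by (auto simp: card_2_iff linorder_neq_iff insert_commute)
  with \<open>\<not> int p dvd _\<close> show ?thesis
    by (intro that) auto
qed

section \<open>Roots of regular polynomials\<close>

definition power_diff_quotient :: "'a::comm_ring_1 \<Rightarrow> 'a \<Rightarrow> nat \<Rightarrow> 'a" where
  "power_diff_quotient x y k = (\<Sum>j<k. y ^ (k - Suc j) * x ^ j)"

lemma power_diff_eq_mult_quotient: "x ^ k - y ^ k = (x - y) * power_diff_quotient x y k"
  unfolding power_diff_quotient_def by (rule power_diff_sumr2)

lemma mult_power_diff_quotient: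
  "y * power_diff_quotient x y k = of_nat k * y ^ k + (\<Sum>j<k. y ^ (k - j) * (x ^ j - y ^ j))"
proof -
  have "y * power_diff_quotient x y k = (\<Sum>j<k. y ^ (k - j) * x ^ j)"
    unfolding power_diff_quotient_def sum_distrib_left
  proof (rule sum.cong)
    fix j assume "j \<in> {..<k}"
    then have "k - j = Suc (k - Suc j)"
      by simp
    then show "y * (y ^ (k - Suc j) * x ^ j) = y ^ (k - j) * x ^ j"
      by simp
  qed simp
  moreover have "(\<Sum>j<k. y ^ (k - j) * y ^ j) = of_nat k * y ^ k"
    by (simp add: power_add[symmetric])
  ultimately show ?thesis
    by (simp add: right_diff_distrib sum_subtractf)
qed

context discretely_valued
begin

lemma term_valuation:
  assumes "i \<in> coeff_support f" "x \<noteq> 0"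
  shows "coeff f i * x ^ i \<noteq> 0" and "v (coeff f i * x ^ i) = term_val v f (v x) i"
  using assms by (simp_all add: coeff_support_def term_val_def valuation_mult valuation_power)

lemma term_in_vball:
  "i \<in> coeff_support f \<Longrightarrow> x \<noteq> 0 \<Longrightarrow> coeff f i * x ^ i \<in> vball v (term_val v f (v x) i)"
  using in_vball_valuation term_valuation(2) by metis

lemma sum_nondominant_terms_in_vball:
  assumes "y \<noteq> 0" "\<And>i. g i \<in> vball v 0"
  shows "(\<Sum>i\<in>coeff_support f - dominant_indices v f (v y). g i * (coeff f i * y ^ i))
           \<in> vball v (min_term_val v f (v y) + 1)"
proof (rule sum_in_vball)
  fix i assume i: "i \<in> coeff_support f - dominant_indices v f (v y)"
  then have "min_term_val v f (v y) + 1 \<le> term_val v f (v y) i"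
    using min_term_val_le[of i f v "v y"] by (fastforce simp: dominant_indices_def)
  then have "coeff f i * y ^ i \<in> vball v (min_term_val v f (v y) + 1)"
    using i term_in_vball[OF _ assms(1)] by (blast intro: vball_antimono)
  then show "g i * (coeff f i * y ^ i) \<in> vball v (min_term_val v f (v y) + 1)"
    using mult_in_vball[OF assms(2)] by fastforce
qed

lemma sum_coeff_mult_in_vball:
  assumes "\<And>i. i \<in> coeff_support f \<Longrightarrow> e i \<in> vball v (int i * v y + 1)"
  shows "(\<Sum>i\<in>coeff_support f. coeff f i * e i) \<in> vball v (min_term_val v f (v y) + 1)"
proof (rule sum_in_vball)
  fix i assume i: "i \<in> coeff_support f"
  have "coeff f i * e i \<in> vball v (v (coeff f i) + (int i * v y + 1))"
    using assms[OF i] by (rule mult_in_vball[OF in_vball_valuation])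
  moreover have "min_term_val v f (v y) + 1 \<le> v (coeff f i) + (int i * v y + 1)"
    using min_term_val_le[OF i] by (simp add: term_val_def)
  ultimately show "coeff f i * e i \<in> vball v (min_term_val v f (v y) + 1)"
    by (rule vball_antimono)
qed

text \<open>By the ultrametric inequality, the terms of least valuation cannot cancel if there is only one
  of them.\<close>
lemma root_valuation_in_edge_valuations:
  assumes "f \<noteq> 0" "x \<noteq> 0" "poly f x = 0"
  shows "v x \<in> edge_valuations v f"
proof (rule ccontr)
  let ?D = "dominant_indices v f (v x)"
  obtain s where s: "s \<in> ?D"
    using dominant_indices_nonempty[OF assms(1)] by blast
  then have s_supp: "s \<in> coeff_support f"
    and s_val: "term_val v f (v x) s = min_term_val v f (v x)"
    by (auto simp: dominant_indices_def)
  assume "v x \<notin> edge_valuations v f"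
  then have "i = s" if "i \<in> ?D" for i
    using that s by (cases i s rule: linorder_cases) (auto simp: edge_valuations_def)
  with s have "?D = {s}"
    by blast
  then have rest:
      "(\<Sum>i\<in>coeff_support f - {s}. coeff f i * x ^ i) \<in> vball v (v (coeff f s * x ^ s) + 1)"
    using sum_nondominant_terms_in_vball[of x "\<lambda>_. 1" f] assms(2)
      term_valuation(2)[OF s_supp assms(2)] s_val by (simp add: vball_iff)
  have "poly f x = coeff f s * x ^ s + (\<Sum>i\<in>coeff_support f - {s}. coeff f i * x ^ i)"
    by (simp add: poly_eq_sum_coeff_support sum.remove[OF finite_coeff_support s_supp])
  also have "\<dots> \<noteq> 0"
    using term_valuation(1)[OF s_supp assms(2)] rest by (rule add_nonzero_if_valuation_less)
  finally show False
    using assms(3) by simp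
qed

lemma power_diff_in_vball:
  assumes "x \<in> vball v m" "y \<in> vball v m" "x - y \<in> vball v (m + 1)"
  shows "x ^ k - y ^ k \<in> vball v (int k * m + 1)"
proof (cases k)
  case (Suc k')
  have "power_diff_quotient x y k \<in> vball v (int k' * m)"
    unfolding power_diff_quotient_def
  proof (rule sum_in_vball)
    fix j assume "j \<in> {..<k}"
    then have "int (k - Suc j) * m + int j * m = int k' * m"
      by (simp add: Suc of_nat_diff algebra_simps)
    then show "y ^ (k - Suc j) * x ^ j \<in> vball v (int k' * m)"
      using mult_in_vball[OF power_in_vball[OF assms(2)] power_in_vball[OF assms(1)]] by metis
  qed
  then have "(x - y) * power_diff_quotient x y k \<in> vball v (m + 1 + int k' * m)"
    by (rule mult_in_vball[OF assms(3)])
  moreover have "m + 1 + int k' * m = int k * m + 1"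
    by (simp add: Suc algebra_simps)
  ultimately show ?thesis
    by (simp only: power_diff_eq_mult_quotient)
qed simp

text \<open>Division by a fixed element of X maps X injectively into the nonzero residue classes.\<close>
lemma card_separated_le_residues:
  assumes "finite (residue_field v)" "\<And>x. x \<in> X \<Longrightarrow> x \<noteq> 0 \<and> v x = m"
    and "\<And>x y. x \<in> X \<Longrightarrow> y \<in> X \<Longrightarrow> x - y \<in> vball v (m + 1) \<Longrightarrow> x = y"
  shows "card X \<le> card (residue_field v) - 1"
proof (cases "X = {}")
  case False
  then obtain z where z: "z \<in> X"
    by blast
  define residue where "residue u = residue_rel v `` {u}" for u
  have residue_in: "u \<in> valring v \<Longrightarrow> residue u \<in> residue_field v" for u
    unfolding residue_def residue_field_def by (rule quotientI)
  have residue_eqD: "u - w \<in> vball v 1" if "u \<in> valring v" "residue u = residue w" for u w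
  proof -
    have "u \<in> residue u"
      using that(1) by (simp add: residue_def residue_rel_def maxideal_def)
    then have "u \<in> residue w"
      using that(2) by simp
    then have "w - u \<in> vball v 1"
      by (simp add: residue_def residue_rel_def maxideal_def)
    then show ?thesis
      using minus_in_vball_iff[of "w - u"] by simp
  qed
  have unit: "x / z \<noteq> 0 \<and> v (x / z) = 0" if "x \<in> X" for x
    using assms(2)[OF that] assms(2)[OF z] by (simp add: valuation_divide)
  then have quotient_in: "x / z \<in> valring v" if "x \<in> X" for x
    using that by (simp add: valring_def vball_iff)
  have "inj_on (\<lambda>x. residue (x / z)) X"
  proof (rule inj_onI)
    fix x y assume x: "x \<in> X" and y: "y \<in> X" and "residue (x / z) = residue (y / z)"
    then have "(x / z - y / z) * z \<in> vball v (1 + v z)"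
      using residue_eqD quotient_in mult_in_vball in_vball_valuation by blast
    then show "x = y"
      using assms(2)[OF z] assms(3)[OF x y] by (simp add: algebra_simps)
  qed
  moreover have "(\<lambda>x. residue (x / z)) ` X \<subseteq> residue_field v - {residue 0}"
  proof safe
    fix x assume x: "x \<in> X"
    show "residue (x / z) \<in> residue_field v"
      using residue_in quotient_in x by blast
    assume "residue (x / z) = residue 0"
    then have "x / z \<in> vball v 1"
      using residue_eqD quotient_in x by fastforce
    then show False
      using unit[OF x] by (simp add: vball_iff)
  qed
  ultimately have "card X \<le> card (residue_field v - {residue 0})"
    using assms(1) by (intro card_inj_on_le) auto
  also have "\<dots> = card (residue_field v) - 1"
    using residue_in[of 0] by (simp add: valring_def)
  finally show ?thesis .
qed simp

end

locale regular_polynomial = discretely_valued +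
  fixes p :: nat and f :: "'a::field poly"
  assumes prime_p: "prime p" and residue_char: "of_nat p \<in> maxideal v"
    and regular: "regular v p f" and nonzero: "f \<noteq> 0"
begin

text \<open>If a, b are the two dominant indices at the root y, subtracting a f(y) = 0 leaves
  (b - a) c_b y^b, of valuation exactly the minimum because p does not divide b - a, as the unique
  term of least valuation.\<close>
lemma perturbed_root_sum_nonzero:
  assumes y: "y \<noteq> 0" "poly f y = 0"
    and e: "\<And>i. i \<in> coeff_support f \<Longrightarrow> e i \<in> vball v (int i * v y + 1)"
  shows "(\<Sum>i\<in>coeff_support f. coeff f i * (of_nat i * y ^ i + e i)) \<noteq> 0"
proof -
  let ?S = "coeff_support f" and ?D = "dominant_indices v f (v y)" and ?c = "coeff f"
  obtain a b where D: "?D = {a, b}" "a < b" "\<not> int p dvd (int b - int a)"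
    using regular_dominant_indices[OF regular root_valuation_in_edge_valuations[OF nonzero y]] .
  then have b: "b \<in> ?S" "term_val v f (v y) b = min_term_val v f (v y)"
    using dominant_indices_subset by (auto simp: dominant_indices_def)
  let ?h = "\<lambda>i. (of_nat i - of_nat a) * (?c i * y ^ i)"
  define z where "z = of_int (int b - int a) * (?c b * y ^ b)"
  have "(\<Sum>i\<in>?S. ?c i * (of_nat i * y ^ i + e i))
      = (\<Sum>i\<in>?S. ?h i) + of_nat a * poly f y + (\<Sum>i\<in>?S. ?c i * e i)"
    by (simp add: poly_eq_sum_coeff_support sum_distrib_left sum.distrib[symmetric] algebra_simps)
  also have "(\<Sum>i\<in>?S. ?h i) = (\<Sum>i\<in>?S - ?D. ?h i) + z"
    using sum.subset_diff[where g = ?h, OF dominant_indices_subset[of v f "v y"] finite_coeff_support] D(1,2)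
    by (simp add: z_def)
  finally have sum_eq: "(\<Sum>i\<in>?S. ?c i * (of_nat i * y ^ i + e i))
      = z + ((\<Sum>i\<in>?S - ?D. ?h i) + (\<Sum>i\<in>?S. ?c i * e i))"
    using y(2) by (simp add: ac_simps)
  have "of_int (int b - int a) \<noteq> (0 :: 'a)" "v (of_int (int b - int a) :: 'a) = 0"
    using of_int_unit_if_not_dvd[OF prime_p _ D(3)] residue_char by (simp_all add: maxideal_def)
  then have z: "z \<noteq> 0" "v z = min_term_val v f (v y)"
    using term_valuation[OF b(1) y(1)] b(2) by (simp_all add: z_def valuation_mult)
  have "(\<Sum>i\<in>?S - ?D. ?h i) + (\<Sum>i\<in>?S. ?c i * e i) \<in> vball v (v z + 1)"
    using sum_nondominant_terms_in_vball[OF y(1) diff_in_vball[OF of_nat_in_vball of_nat_in_vball]]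
      sum_coeff_mult_in_vball[OF e] z(2) by (intro add_in_vball) auto
  with z(1) show ?thesis
    unfolding sum_eq by (rule add_nonzero_if_valuation_less)
qed

lemma order_root_eq_1:
  assumes "x \<noteq> 0" "poly f x = 0"
  shows "order x f = 1"
proof (rule ccontr)
  assume "order x f \<noteq> 1"
  moreover have "order x f \<noteq> 0"
    using assms nonzero order_root by blast
  ultimately have "poly (pderiv f) x = 0"
    using nonzero by (intro poly_pderiv_eq_0_if_multiple_root) auto
  then have "(\<Sum>i\<in>coeff_support f. coeff f i * (of_nat i * x ^ i + 0)) = 0"
    using poly_pderiv_times_eq_sum[of x f] by simp
  moreover have "(\<Sum>i\<in>coeff_support f. coeff f i * (of_nat i * x ^ i + 0)) \<noteq> 0"
    by (rule perturbed_root_sum_nonzero[OF assms]) simp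
  ultimately show False
    by contradiction
qed

text \<open>y times the divided difference (f(x) - f(y))/(x - y) is a perturbed root sum at y.\<close>
lemma roots_eq_if_congruent:
  assumes "poly f x = 0" "y \<noteq> 0" "poly f y = 0" "x - y \<in> vball v (v y + 1)"
  shows "x = y"
proof (rule ccontr)
  assume "x \<noteq> y"
  define e where "e i = (\<Sum>j<i. y ^ (i - j) * (x ^ j - y ^ j))" for i
  have x_vball: "x \<in> vball v (v y)"
    using add_in_vball[OF in_vball_valuation vball_antimono[OF assms(4)], of y] by simp
  have "e i \<in> vball v (int i * v y + 1)" for i
    unfolding e_def
  proof (rule sum_in_vball)
    fix j assume "j \<in> {..<i}"
    then have "int (i - j) * v y + (int j * v y + 1) = int i * v y + 1"
      by (simp add: of_nat_diff algebra_simps)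
    then show "y ^ (i - j) * (x ^ j - y ^ j) \<in> vball v (int i * v y + 1)"
      using mult_in_vball[OF power_in_vball[OF in_vball_valuation]
          power_diff_in_vball[OF x_vball in_vball_valuation assms(4)]] by metis
  qed
  then have "(\<Sum>i\<in>coeff_support f. coeff f i * (of_nat i * y ^ i + e i)) \<noteq> 0"
    using perturbed_root_sum_nonzero[OF assms(2,3)] by blast
  moreover have "(\<Sum>i\<in>coeff_support f. coeff f i * power_diff_quotient x y i) = 0"
  proof -
    have "(x - y) * (\<Sum>i\<in>coeff_support f. coeff f i * power_diff_quotient x y i)
        = (\<Sum>i\<in>coeff_support f. coeff f i * (x ^ i - y ^ i))"
      by (simp add: power_diff_eq_mult_quotient sum_distrib_left algebra_simps)
    also have "\<dots> = poly f x - poly f y"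
      by (simp add: poly_eq_sum_coeff_support sum_subtractf right_diff_distrib)
    finally show ?thesis
      using assms(1,3) \<open>x \<noteq> y\<close> by simp
  qed
  moreover have "y * (\<Sum>i\<in>coeff_support f. coeff f i * power_diff_quotient x y i)
      = (\<Sum>i\<in>coeff_support f. coeff f i * (y * power_diff_quotient x y i))"
    by (simp add: sum_distrib_left ac_simps)
  moreover have "y * power_diff_quotient x y i = of_nat i * y ^ i + e i" for i
    by (simp add: mult_power_diff_quotient e_def)
  ultimately show False
    by simp
qed

lemma card_roots_with_valuation_le:
  assumes "finite (residue_field v)"
  shows "card {x. x \<noteq> 0 \<and> poly f x = 0 \<and> v x = m} \<le> card (residue_field v) - 1"
  by (rule card_separated_le_residues[OF assms]) (auto intro: roots_eq_if_congruent)

lemma card_nonzero_roots_le: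
  assumes "finite (residue_field v)"
  shows "card {x. x \<noteq> 0 \<and> poly f x = 0}
           \<le> (card (coeff_support f) - 1) * (card (residue_field v) - 1)"
proof -
  define R where "R = {x. x \<noteq> 0 \<and> poly f x = 0}"
  have "finite R"
    using poly_roots_finite[OF nonzero] by (simp add: R_def)
  have "R = (\<Union>m\<in>v ` R. {x \<in> R. v x = m})"
    by blast
  then have "card R \<le> (\<Sum>m\<in>v ` R. card {x \<in> R. v x = m})"
    by (metis card_UN_le finite_imageI \<open>finite R\<close>)
  also have "\<dots> \<le> card (v ` R) * (card (residue_field v) - 1)"
    using sum_mono[OF card_roots_with_valuation_le[OF assms]] by (simp add: R_def)
  also have "card (v ` R) \<le> card (edge_valuations v f)"
    using root_valuation_in_edge_valuations[OF nonzero]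
    by (intro card_mono[OF finite_edge_valuations]) (auto simp: R_def)
  also have "\<dots> \<le> card (coeff_support f) - 1"
    by (rule card_edge_valuations_le)
  finally show ?thesis
    by (simp add: R_def mult_right_mono)
qed

end

theorem corollary4p7:
  fixes v :: "'a::field \<Rightarrow> int" and q p t :: nat and f :: "'a poly"
  assumes "discrete_valuation v" and "v_complete v"
    and "finite (residue_field v)" and "card (residue_field v) = q"
    and "prime p" and "of_nat p \<in> maxideal v"
    and "regular v p f"
    and "card {i. coeff f i \<noteq> 0} = t + 1"
  shows "card {x. x \<noteq> 0 \<and> poly f x = 0} \<le> t * (q - 1) \<and>
         (\<forall>x. x \<noteq> 0 \<and> poly f x = 0 \<longrightarrow> order x f = 1)"
proof -
  have support: "card (coeff_support f) = t + 1"
    using assms(8) by (simp add: coeff_support_def)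
  then have "f \<noteq> 0"
    by (auto simp: coeff_support_empty_iff[symmetric])
  then interpret regular_polynomial v p f
    using assms by unfold_locales
  show ?thesis
    using card_nonzero_roots_le[OF assms(3)] order_root_eq_1 support assms(4) by simp
qed

end
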